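(* Let $\mathcal{CB}(\mathcal{C},\mathcal{W}_t,\mathcal{W}_r)$ be a cellular blind interference alignment problem under sufficient coherence and let $\mathcal{GIC}(\mathcal{W}_r,\overline{\mathcal{W}}_r)$ be the corresponding Gaussian index coding problem, i.e., with the same desired message sets $\mathcal{W}_r$ and $\overline{\mathcal{W}}_r=\bigcup_{t\in\mathcal{T}:\,c_{rt}=0}\mathcal{W}_t$ for every receiver $r$. Then the maximum DoF achievable through linear beamforming in the Gaussian index coding problem equals the maximum DoF achievable through linear beamforming in the cellular blind interference alignment problem.
   Context: CB problem: transmitters $\mathcal{T}$, receivers $\mathcal{R}$, independent messages $\mathcal{W}$; transmitter $t$ holds $\mathcal{W}_t$ (pairwise disjoint, union $\mathcal{W}$); receiver $r$ desires $\mathcal{W}_r$; fixed connectivity $c_{rt}\in\{0,1\}$, $\mathcal{C}=\{(r,t):c_{rt}=1\}$. Single-antenna nodes; receiver $r$ observes $Y_r(n)=\sum_t c_{rt}H_{rt}(n)X_t(n)+Z_r(n)$ with unit-variance circularly symmetric complex Gaussian noise, power constraint $P$, nonzero channel coefficients (magnitudes bounded away from $0$ and $\infty$) known to the receiver for connected transmitters and unknown to transmitters (no CSIT). Sufficient coherence: the network coherence time may be taken as large as needed, so that all channel coefficients are constant over the $T$ channel uses of any scheme considered. GIC problem: one single-antenna transmitter knowing all messages, receiver $r$ observes $Y_r(n)=X(n)+Z_r(n)$, knows $\overline{\mathcal{W}}_r$ a priori, desires $\mathcal{W}_r$. Linear beamforming over $T$ channel uses: each message $W$ is assigned $d_W$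 information symbols sent along the columns of a $T\times d_W$ complex beamforming matrix $V_W$ (not depending on channel realizations), the transmitted signals of all messages being linearly superimposed (in CB, each message is sent by the transmitter where it originates). At receiver $r$, the interfering messages are those neither desired nor known a priori (in GIC: not in $\mathcal{W}_r\cup\overline{\mathcal{W}}_r$; in CB: messages from transmitters $t$ with $c_{rt}=1$ not in $\mathcal{W}_r$), and the scheme is feasible if at every receiver the columns of the (received, channel-scaled) beamforming matrices of its desired messages are linearly independent of each other and of the span of the received beamforming columns of its interfering messages. The DoF of such a scheme is $\sum_W d_W/T$; the maximum linear-beamforming DoF is the supremum over $T$ and feasible schemes. *)

theory Defs
  imports Complex_Main "HOL-Library.Extended_Real"
begin

text \<open>A scheme is a triple (T, d, V):
  d W is the number of information symbols of message W, and V W j k is the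
  entry in row k (channel use k < T) of column j (j < d W) of the
  T x (d W) beamforming matrix of message W.  Vectors are functions
  nat => complex of which only the entries k < T are relevant.\<close>

definition indep_of_span ::
  "('i \<Rightarrow> nat \<Rightarrow> complex) \<Rightarrow> 'i set \<Rightarrow> ('j \<Rightarrow> nat \<Rightarrow> complex) \<Rightarrow> 'j set \<Rightarrow> nat \<Rightarrow> bool" where
  "indep_of_span u I v J T \<longleftrightarrow>
     (\<forall>a b. (\<forall>k<T. (\<Sum>i\<in>I. a i * u i k) + (\<Sum>j\<in>J. b j * v j k) = 0)
            \<longrightarrow> (\<forall>i\<in>I. a i = 0))"

definition cols :: "('w \<Rightarrow> nat) \<Rightarrow> 'w set \<Rightarrow> ('w \<times> nat) set" where
  "cols d S = (SIGMA W:S. {..<d W})"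

definition gic_feasible ::
  "('r \<Rightarrow> 'w set) \<Rightarrow> ('r \<Rightarrow> 'w set) \<Rightarrow> nat \<Rightarrow> ('w \<Rightarrow> nat) \<Rightarrow> ('w \<Rightarrow> nat \<Rightarrow> nat \<Rightarrow> complex) \<Rightarrow> bool" where
  "gic_feasible des known T d V \<longleftrightarrow>
     (\<forall>r. indep_of_span (\<lambda>(W,j) k. V W j k) (cols d (des r))
                        (\<lambda>(W,j) k. V W j k) (cols d {W. W \<notin> des r \<and> W \<notin> known r}) T)"

text \<open>CB: message W originates at transmitter orig W; c r t is the connectivity;
  channel coefficients H r t (nonzero, constant over the T channel uses, unknown to
  the transmitters, so V must work for every channel realization).  The received
  column is c_{rt} H_{rt} times the transmitted column.\<close>
definition cb_feasible ::
  "('r \<Rightarrow> 't \<Rightarrow> bool) \<Rightarrow> ('w \<Rightarrow> 't) \<Rightarrow> ('r \<Rightarrow> 'w set) \<Rightarrow> nat \<Rightarrow> ('w \<Rightarrow> nat) \<Rightarrow> ('w \<Rightarrow> nat \<Rightarrow> nat \<Rightarrow> complex) \<Rightarrow> bool" where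
  "cb_feasible c orig des T d V \<longleftrightarrow>
     (\<forall>H::'r \<Rightarrow> 't \<Rightarrow> complex. (\<forall>r t. H r t \<noteq> 0) \<longrightarrow>
       (\<forall>r. indep_of_span
              (\<lambda>(W,j) k. (if c r (orig W) then H r (orig W) else 0) * V W j k) (cols d (des r))
              (\<lambda>(W,j) k. H r (orig W) * V W j k) (cols d {W. c r (orig W) \<and> W \<notin> des r}) T))"

definition max_lin_dof ::
  "(nat \<Rightarrow> ('w::finite \<Rightarrow> nat) \<Rightarrow> ('w \<Rightarrow> nat \<Rightarrow> nat \<Rightarrow> complex) \<Rightarrow> bool) \<Rightarrow> ereal" where
  "max_lin_dof feasible =
     (SUP s \<in> {(T, d, V). 0 < T \<and> feasible T d V}.
        ereal (real (\<Sum>W\<in>UNIV. fst (snd s) W) / real (fst s)))"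

end

theory Submission
  imports Defs
begin

text \<open>Without CSIT the channel coefficient H r t is a nonzero scalar that multiplies
  every column sent from t and received at r.  Linear independence of the desired
  columns from the span of the interfering columns is invariant under such column
  scalings, so for every channel realization the CB condition at receiver r is just
  the channel-free condition on the columns of the connected transmitters.  The
  messages of unconnected transmitters are exactly the side information of the GIC
  receiver, so both problems have the same feasible schemes, hence the same DoF.\<close>

lemma indep_of_span_cong:
  assumes "\<And>i k. i \<in> I \<Longrightarrow> k < T \<Longrightarrow> u i k = u' i k"
    and "\<And>j k. j \<in> J \<Longrightarrow> k < T \<Longrightarrow> v j k = v' j k"
  shows "indep_of_span u I v J T \<longleftrightarrow> indep_of_span u' I v' J T"
  using assms unfolding indep_of_span_def by (simp cong: sum.cong)

lemma indep_of_span_scale: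
  fixes f g :: "_ \<Rightarrow> complex"
  assumes indep: "indep_of_span u I v J T" and f: "\<And>i. i \<in> I \<Longrightarrow> f i \<noteq> 0"
  shows "indep_of_span (\<lambda>i k. f i * u i k) I (\<lambda>j k. g j * v j k) J T"
  unfolding indep_of_span_def
proof (intro allI impI ballI)
  fix a b i
  assume "\<forall>k<T. (\<Sum>i\<in>I. a i * (f i * u i k)) + (\<Sum>j\<in>J. b j * (g j * v j k)) = 0"
  then have "\<forall>k<T. (\<Sum>i\<in>I. (a i * f i) * u i k) + (\<Sum>j\<in>J. (b j * g j) * v j k) = 0"
    by (simp add: mult.assoc)
  moreover assume "i \<in> I"
  ultimately have "a i * f i = 0"
    using indep[unfolded indep_of_span_def, rule_format, of "\<lambda>i. a i * f i" "\<lambda>j. b j * g j"]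
    by simp
  with f \<open>i \<in> I\<close> show "a i = 0" by simp
qed

lemma indep_of_span_scale_iff:
  fixes f g :: "_ \<Rightarrow> complex"
  assumes f: "\<And>i. i \<in> I \<Longrightarrow> f i \<noteq> 0" and g: "\<And>j. j \<in> J \<Longrightarrow> g j \<noteq> 0"
  shows "indep_of_span (\<lambda>i k. f i * u i k) I (\<lambda>j k. g j * v j k) J T
     \<longleftrightarrow> indep_of_span u I v J T"
proof
  assume "indep_of_span (\<lambda>i k. f i * u i k) I (\<lambda>j k. g j * v j k) J T"
  then have "indep_of_span (\<lambda>i k. inverse (f i) * (f i * u i k)) I
                           (\<lambda>j k. inverse (g j) * (g j * v j k)) J T"
    by (rule indep_of_span_scale) (simp add: f)
  moreover have "indep_of_span (\<lambda>i k. inverse (f i) * (f i * u i k)) I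
                                (\<lambda>j k. inverse (g j) * (g j * v j k)) J T
      \<longleftrightarrow> indep_of_span u I v J T"
    using f g by (intro indep_of_span_cong) auto
  ultimately show "indep_of_span u I v J T" by blast
qed (rule indep_of_span_scale[OF _ f])

lemma cb_receiver_indep_iff:
  fixes H :: "'r \<Rightarrow> 't \<Rightarrow> complex"
  assumes H: "\<forall>r t. H r t \<noteq> 0" and des_connected: "\<forall>W\<in>des r. c r (orig W)"
  shows "indep_of_span
           (\<lambda>(W,j) k. (if c r (orig W) then H r (orig W) else 0) * V W j k) (cols d (des r))
           (\<lambda>(W,j) k. H r (orig W) * V W j k) (cols d {W. c r (orig W) \<and> W \<notin> des r}) T
     \<longleftrightarrow> indep_of_span (\<lambda>(W,j) k. V W j k) (cols d (des r))
           (\<lambda>(W,j) k. V W j k) (cols d {W. c r (orig W) \<and> W \<notin> des r}) T"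
    (is "?cb \<longleftrightarrow> ?free")
proof -
  have "?cb \<longleftrightarrow> indep_of_span
           (\<lambda>i k. H r (orig (fst i)) * (\<lambda>(W,j) k. V W j k) i k) (cols d (des r))
           (\<lambda>i k. H r (orig (fst i)) * (\<lambda>(W,j) k. V W j k) i k)
           (cols d {W. c r (orig W) \<and> W \<notin> des r}) T"
    using des_connected by (intro indep_of_span_cong) (auto simp: cols_def)
  also have "\<dots> \<longleftrightarrow> ?free"
    using H by (intro indep_of_span_scale_iff) auto
  finally show ?thesis .
qed

lemma cb_feasible_iff_channel_free:
  assumes des_connected: "\<forall>r. \<forall>W\<in>des r. c r (orig W)"
  shows "cb_feasible c orig des T d V \<longleftrightarrow>
    (\<forall>r. indep_of_span (\<lambda>(W,j) k. V W j k) (cols d (des r))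
           (\<lambda>(W,j) k. V W j k) (cols d {W. c r (orig W) \<and> W \<notin> des r}) T)"
proof -
  have "\<exists>H :: 'r \<Rightarrow> 't \<Rightarrow> complex. \<forall>r t. H r t \<noteq> 0"
    by (rule exI[of _ "\<lambda>_ _. 1"]) simp
  then show ?thesis
    unfolding cb_feasible_def by (simp add: cb_receiver_indep_iff des_connected) blast
qed

lemma gic_feasible_side_info_unconnected:
  "gic_feasible des (\<lambda>r. \<Union>t\<in>{t. \<not> c r t}. {W. orig W = t}) T d V \<longleftrightarrow>
    (\<forall>r. indep_of_span (\<lambda>(W,j) k. V W j k) (cols d (des r))
           (\<lambda>(W,j) k. V W j k) (cols d {W. c r (orig W) \<and> W \<notin> des r}) T)"
proof -
  have "{W. W \<notin> des r \<and> W \<notin> (\<Union>t\<in>{t. \<not> c r t}. {W. orig W = t})}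
      = {W. c r (orig W) \<and> W \<notin> des r}" for r
    by auto
  then show ?thesis
    unfolding gic_feasible_def by simp
qed

theorem theorem9:
  fixes c :: "'r::finite \<Rightarrow> 't::finite \<Rightarrow> bool"
    and orig :: "'w::finite \<Rightarrow> 't"
    and des :: "'r \<Rightarrow> 'w set"
  assumes "\<forall>r. \<forall>W\<in>des r. c r (orig W)"
  shows "max_lin_dof (gic_feasible des (\<lambda>r. \<Union>t\<in>{t. \<not> c r t}. {W. orig W = t}))
       = max_lin_dof (cb_feasible c orig des)"
proof -
  have "gic_feasible des (\<lambda>r. \<Union>t\<in>{t. \<not> c r t}. {W. orig W = t}) = cb_feasible c orig des"
    by (intro ext)
      (simp only: gic_feasible_side_info_unconnected cb_feasible_iff_channel_free[of des c orig, OF assms])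
  then show ?thesis by simp
qed

end
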